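(* Let $(a_n)_{n\ge1}$ be an integer sequence such that $(na_n)_{n\ge1}$ is an Euler sequence. Then $(na_n)_{n\ge1}$ is an Euler–Gauss sequence. Moreover, for an integer sequence $(b_n)_{n\ge1}$, the sequence $(nb_n)_{n\ge1}$ is a Gauss sequence if and only if $b_n=0$ for all $n\ge1$.
   Context: $\mu$ is the Möbius function. An Euler sequence is an integer sequence $(c_n)$ with $c_{p^r}\equiv c_{p^{r-1}}\pmod{p^r}$ for all primes $p$ and integers $r\ge1$. For an integer sequence $(c_n)$ and $n\ge1$, $C_n^+=\prod_{d\mid n,\ \mu(d)=1} c_{n/d}$ and $C_n^-=\prod_{d\mid n,\ \mu(d)=-1} c_{n/d}$ (empty products equal $1$); $(c_n)$ is an Euler–Gauss sequence if $C_n^+\equiv C_n^-\pmod n$ for all $n\ge1$, and a Gauss sequence if $\sum_{d\mid n}\mu(d)c_{n/d}\equiv0\pmod n$ for all $n\ge1$. *)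

theory Defs
  imports "HOL-Computational_Algebra.Primes" "HOL-Number_Theory.Cong"
begin

definition moebius :: "nat \<Rightarrow> int" where
  "moebius n = (if n = 0 then 0
     else if \<exists>p. prime p \<and> p^2 dvd n then 0
     else (-1) ^ card (prime_factors n))"

text \<open>Sequences (c_n)_{n>=1} are modelled as functions nat => int; the value at 0 is irrelevant.\<close>
definition euler_seq :: "(nat \<Rightarrow> int) \<Rightarrow> bool" where
  "euler_seq c \<longleftrightarrow> (\<forall>p r. prime p \<and> r \<ge> 1 \<longrightarrow>
      [c (p ^ r) = c (p ^ (r - 1))] (mod int (p ^ r)))"

definition C_plus :: "(nat \<Rightarrow> int) \<Rightarrow> nat \<Rightarrow> int" where
  "C_plus c n = (\<Prod>d\<in>{d. d dvd n \<and> moebius d = 1}. c (n div d))"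

definition C_minus :: "(nat \<Rightarrow> int) \<Rightarrow> nat \<Rightarrow> int" where
  "C_minus c n = (\<Prod>d\<in>{d. d dvd n \<and> moebius d = -1}. c (n div d))"

definition euler_gauss_seq :: "(nat \<Rightarrow> int) \<Rightarrow> bool" where
  "euler_gauss_seq c \<longleftrightarrow> (\<forall>n\<ge>1. [C_plus c n = C_minus c n] (mod int n))"

definition gauss_seq :: "(nat \<Rightarrow> int) \<Rightarrow> bool" where
  "gauss_seq c \<longleftrightarrow> (\<forall>n\<ge>1. [(\<Sum>d | d dvd n. moebius d * c (n div d)) = 0] (mod int n))"

end

theory Submission
  imports Defs
begin

text \<open>Write \<open>c n = n a n\<close>. If \<open>n = p^k\<close> the only nonzero Moebius values among the divisors
  are at 1 and p, so \<open>C\<^sup>+\<^sub>n = c (p^k)\<close>, \<open>C\<^sup>-\<^sub>n = c (p^(k-1))\<close> and the Euler congruence is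
  exactly what is needed. If n has two distinct prime factors p and q, then n divides the factor
  \<open>c n\<close> of \<open>C\<^sup>+\<^sub>n\<close> as well as \<open>(n/p)(n/q)\<close>, which divides the factor \<open>c (n/p) c (n/q)\<close> of
  \<open>C\<^sup>-\<^sub>n\<close>, so both sides vanish mod n.

  For the Gauss part, let n be minimal with \<open>b n \<noteq> 0\<close> and take a prime \<open>p > n, |n b n|\<close>. In the
  Gauss congruence at \<open>n p\<close> every term other than \<open>d = p\<close> is divisible by p: either p divides
  \<open>n p / d\<close>, or \<open>n p / d\<close> is a proper divisor of n. Hence p divides \<open>\<mu>(p) n b n = - n b n\<close>,
  which forces \<open>n b n = 0\<close>.\<close>

lemma moebius_Suc_0 [simp]: "moebius (Suc 0) = 1"
  unfolding moebius_def by (auto simp: prime_gt_1_nat)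

lemma moebius_prime:
  assumes "prime (p::nat)"
  shows "moebius p = -1"
proof -
  have "\<not> q^2 dvd p" if "prime q" for q
  proof
    assume "q^2 dvd p"
    then have "q dvd p" by (meson dvd_power dvd_trans zero_less_numeral)
    then have "q = p" using assms that by (simp add: primes_dvd_imp_eq)
    with \<open>q^2 dvd p\<close> assms show False
      by (simp add: power2_eq_square prime_gt_1_nat)
  qed
  then show ?thesis
    using assms unfolding moebius_def by (auto simp: prime_prime_factors)
qed

lemma moebius_prime_power:
  assumes "prime (p::nat)" "i \<ge> 2"
  shows "moebius (p ^ i) = 0"
  using assms le_imp_power_dvd[OF assms(2), of p] unfolding moebius_def by auto

lemma prime_power_divisor_moebius_nonzero:
  assumes "prime (p::nat)" "d dvd p ^ k" "moebius d \<noteq> 0"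
  shows "d = 1 \<or> d = p"
proof -
  obtain i where "d = p ^ i" "i \<le> k"
    using assms(2) divides_primepow_nat[OF assms(1)] by blast
  moreover have "i < 2"
    using assms(1,3) moebius_prime_power \<open>d = p ^ i\<close> by (metis not_less)
  ultimately show ?thesis by (auto simp: less_2_cases_iff)
qed

lemma C_plus_prime_power:
  assumes "prime p" "k \<ge> 1"
  shows "C_plus c (p ^ k) = c (p ^ k)"
proof -
  have "{d. d dvd p ^ k \<and> moebius d = 1} = {1}"
    using moebius_prime[OF assms(1)]
    by (auto dest: prime_power_divisor_moebius_nonzero[OF assms(1)])
  then show ?thesis unfolding C_plus_def by simp
qed

lemma C_minus_prime_power:
  assumes "prime p" "k \<ge> 1"
  shows "C_minus c (p ^ k) = c (p ^ (k - 1))"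
proof -
  have "d = p" if "d dvd p ^ k" "moebius d = -1" for d
    using prime_power_divisor_moebius_nonzero[OF assms(1) that(1)] that(2) by auto
  then have "{d. d dvd p ^ k \<and> moebius d = -1} = {p}"
    using moebius_prime[OF assms(1)] assms(2) by (auto simp: dvd_power)
  moreover have "p ^ k div p = p ^ (k - 1)"
    using assms by (simp add: power_diff prime_gt_0_nat)
  ultimately show ?thesis unfolding C_minus_def by simp
qed

lemma finite_divisors_with:
  "(n::nat) \<ge> 1 \<Longrightarrow> finite {d. d dvd n \<and> P d}"
  by (rule finite_subset[of _ "{d. d dvd n}"]) (auto simp: finite_divisors_nat)

lemma dvd_C_plus:
  assumes "n \<ge> 1"
  shows "c n dvd C_plus c n"
proof -
  have "1 \<in> {d. d dvd n \<and> moebius d = 1}" by simp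
  from dvd_prodI[OF finite_divisors_with[OF assms] this, of "\<lambda>d. c (n div d)"] show ?thesis
    unfolding C_plus_def by simp
qed

lemma dvd_C_minus:
  assumes "n \<ge> 1" "prime p" "prime q" "p \<noteq> q" "p dvd n" "q dvd n"
  shows "c (n div p) * c (n div q) dvd C_minus c n"
proof -
  have "c (n div p) * c (n div q) = (\<Prod>d\<in>{p, q}. c (n div d))"
    using assms(4) by simp
  also have "\<dots> dvd C_minus c n"
    unfolding C_minus_def
    by (rule prod_dvd_prod_subset[OF finite_divisors_with[OF assms(1)]])
       (use assms moebius_prime in auto)
  finally show ?thesis .
qed

lemma prime_power_or_two_prime_divisors:
  fixes n :: nat
  assumes "n > 1"
  obtains p k where "prime p" "k \<ge> 1" "n = p ^ k"
    | p q where "prime p" "prime q" "p \<noteq> q" "p dvd n" "q dvd n"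
proof -
  obtain p where p: "prime p" "p dvd n"
    using assms prime_factor_nat by (metis not_less_iff_gr_or_eq)
  define k where "k = multiplicity p n"
  obtain m where m: "n = p ^ k * m" "\<not> p dvd m"
    using multiplicity_decompose'[of n p] assms p(1) unfolding k_def
    by (metis not_prime_unit not_one_less_zero)
  show thesis
  proof (cases "m = 1")
    case True
    moreover have "k \<ge> 1"
      using p assms prime_multiplicity_gt_zero_iff[of p n] unfolding k_def by simp
    ultimately show thesis using that(1) p(1) m(1) by simp
  next
    case False
    moreover have "m \<noteq> 0" using m(1) assms by (metis less_nat_zero_code mult_0_right)
    ultimately obtain q where "prime q" "q dvd m" using prime_factor_nat by blast
    moreover have "p \<noteq> q" using m(2) \<open>q dvd m\<close> by auto
    ultimately show thesis using that(2) p m(1) by simp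
  qed
qed

lemma euler_gauss_seq_if_index_dvd:
  assumes euler: "euler_seq c" and index_dvd: "\<And>n. int n dvd c n"
  shows "euler_gauss_seq c"
  unfolding euler_gauss_seq_def
proof (intro allI impI)
  fix n :: nat
  assume n: "n \<ge> 1"
  show "[C_plus c n = C_minus c n] (mod int n)"
  proof (cases "n = 1")
    case False
    with n have "n > 1" by simp
    then consider p k where "prime p" "k \<ge> 1" "n = p ^ k"
      | p q where "prime p" "prime q" "p \<noteq> q" "p dvd n" "q dvd n"
      by (rule prime_power_or_two_prime_divisors)
    then show ?thesis
    proof cases
      case (1 p k)
      then show ?thesis
        using euler C_plus_prime_power C_minus_prime_power unfolding euler_seq_def by simp
    next
      case (2 p q)
      have "int n dvd C_plus c n"
        using index_dvd dvd_C_plus[OF n] by (rule dvd_trans)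
      moreover have "int n dvd C_minus c n"
      proof -
        have "p * q dvd n"
          using 2 by (simp add: divides_mult primes_coprime)
        then obtain r where "n = p * q * r" ..
        then have "int n dvd int (n div p) * int (n div q)"
          using 2 by (simp add: prime_gt_0_nat)
        also have "\<dots> dvd c (n div p) * c (n div q)"
          by (intro mult_dvd_mono index_dvd)
        also have "\<dots> dvd C_minus c n"
          using dvd_C_minus[OF n 2] .
        finally show ?thesis .
      qed
      ultimately show ?thesis by (simp add: cong_def dvd_eq_mod_eq_0)
    qed
  qed simp
qed

lemma gauss_seq_prime_dvd:
  fixes c :: "nat \<Rightarrow> int"
  assumes gauss: "gauss_seq c" and p: "prime p" "\<not> p dvd n" and n: "n \<ge> 1"
    and below: "\<And>m. m dvd n \<Longrightarrow> m < n \<Longrightarrow> c m = 0"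
    and multiples: "\<And>m. p dvd m \<Longrightarrow> int p dvd c m"
  shows "int p dvd c n"
proof -
  define N where "N = n * p"
  define f where "f = (\<lambda>d. moebius d * c (N div d))"
  have N: "N \<ge> 1"
    using n prime_gt_0_nat[OF p(1)] by (simp add: N_def)
  have "int N dvd (\<Sum>d | d dvd N. f d)"
    using gauss N unfolding gauss_seq_def f_def by (simp add: cong_0_iff)
  then have sum: "int p dvd (\<Sum>d | d dvd N. f d)"
    by (rule dvd_trans[rotated]) (simp add: N_def)
  have other_terms: "int p dvd f d" if "d dvd N" "d \<noteq> p" for d
  proof (cases "p dvd N div d")
    case True
    then show ?thesis by (simp add: f_def multiples)
  next
    case False
    then have "coprime (N div d) p"
      using p(1) by (simp add: prime_imp_coprime coprime_commute)
    moreover have "N div d dvd n * p"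
      using that(1) unfolding N_def by (metis dvd_div_mult_self dvd_triv_left)
    ultimately have "N div d dvd n"
      by (simp add: coprime_dvd_mult_left_iff)
    moreover have "N div d \<noteq> n"
    proof
      assume "N div d = n"
      then have "d * n = p * n"
        using that(1) by (metis N_def dvd_mult_div_cancel mult.commute)
      then show False using that(2) n by simp
    qed
    ultimately have "c (N div d) = 0"
      using below dvd_imp_le[of "N div d" n] n by simp
    then show ?thesis by (simp add: f_def)
  qed
  have "(\<Sum>d | d dvd N. f d) = f p + (\<Sum>d \<in> {d. d dvd N} - {p}. f d)"
    by (rule sum.remove) (use N in \<open>auto simp: N_def finite_divisors_nat\<close>)
  moreover have "int p dvd (\<Sum>d \<in> {d. d dvd N} - {p}. f d)"
    using other_terms by (intro dvd_sum) auto
  ultimately have "int p dvd f p"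
    using sum by (simp add: dvd_add_left_iff)
  moreover have "f p = - c n"
    using p(1) by (simp add: f_def N_def moebius_prime prime_gt_0_nat)
  ultimately show ?thesis by simp
qed

lemma gauss_seq_mult_index_imp_zero:
  fixes b :: "nat \<Rightarrow> int"
  assumes gauss: "gauss_seq (\<lambda>n. int n * b n)"
  shows "n \<ge> 1 \<Longrightarrow> b n = 0"
proof (induction n rule: less_induct)
  case (less n)
  define x where "x = int n * b n"
  obtain p where p: "prime p" "p > n + nat \<bar>x\<bar>"
    using bigger_prime by blast
  have "int p dvd x"
    unfolding x_def
  proof (rule gauss_seq_prime_dvd[OF gauss p(1) _ less.prems])
    show "\<not> p dvd n"
      using p(2) less.prems by (auto dest: dvd_imp_le)
    show "int m * b m = 0" if "m dvd n" "m < n" for m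
      using less.IH[OF that(2)] that less.prems by (cases "m = 0") auto
  qed simp
  moreover have "\<bar>x\<bar> < int p"
    using p(2) by linarith
  ultimately have "x = 0"
    using dvd_imp_le_int[of x "int p"] by (metis abs_of_nat not_le)
  then show ?case
    using less.prems by (simp add: x_def)
qed

theorem theorem4:
  shows "(\<forall>a :: nat \<Rightarrow> int. euler_seq (\<lambda>n. int n * a n) \<longrightarrow>
            euler_gauss_seq (\<lambda>n. int n * a n))
       \<and> (\<forall>b :: nat \<Rightarrow> int. gauss_seq (\<lambda>n. int n * b n) \<longleftrightarrow> (\<forall>n\<ge>1. b n = 0))"
proof (intro conjI allI impI iffI)
  fix a :: "nat \<Rightarrow> int"
  assume "euler_seq (\<lambda>n. int n * a n)"
  then show "euler_gauss_seq (\<lambda>n. int n * a n)"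
    by (rule euler_gauss_seq_if_index_dvd) simp
next
  fix b :: "nat \<Rightarrow> int" and n :: nat
  assume "gauss_seq (\<lambda>n. int n * b n)" and "n \<ge> 1"
  then show "b n = 0"
    by (rule gauss_seq_mult_index_imp_zero)
next
  fix b :: "nat \<Rightarrow> int"
  assume "\<forall>n\<ge>1. b n = 0"
  then have "(\<lambda>n. int n * b n) = (\<lambda>_. 0)"
    by (intro ext) (metis less_one mult_eq_0_iff not_less of_nat_0)
  then show "gauss_seq (\<lambda>n. int n * b n)"
    by (simp add: gauss_seq_def)
qed

end
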